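(* Let $N\ge 1$, $0<p<1$, $q=1-p$. Let $(\mathbf{x}^0,\mathbf{t}^0)=((x^0_1,t^0_1),\dots,(x^0_N,t^0_N))$ and $(\mathbf{x},\mathbf{t})=((x_1,t_1),\dots,(x_N,t_N))$ be two admissible $N$-point configurations in $\mathbb{Z}^2$ such that $t_i>t_i^0$ for $i=1,\dots,N$. Then the generalized Green function satisfies $$G\big((\mathbf{x},\mathbf{t})\,|\,(\mathbf{x}^0,\mathbf{t}^0)\big)=\det\big[F_{j-i}(x_i-x^0_j,\;t_i-t^0_j)\big]_{i,j=1,\dots,N}.$$
   Context: An $N$-point configuration $((x_1,t_1),\dots,(x_N,t_N))\in(\mathbb{Z}^2)^N$ (first coordinate = space, second = time) is called admissible if $x_1>x_2>\dots>x_N$ and $t_1\le t_2\le\dots\le t_N$. A directed lattice path from $(a,s)$ to $(b,s')$, $s'>s$, is a sequence of points $(y^k,s+k)$, $k=0,\dots,s'-s$, with $y^0=a$, $y^{s'-s}=b$, $y^{k+1}-y^k\in\{0,1\}$. Given admissible $(\mathbf{x}^0,\mathbf{t}^0)$, $(\mathbf{x},\mathbf{t})$ with $t_i>t_i^0$, an $N$-path is a tuple $(\Pi_1,\dots,\Pi_N)$ where $\Pi_i$ is a directed lattice path from $(x_i^0,t_i^0)$ to $(x_i,t_i)$ (regarded also as a set of points of $\mathbb{Z}^2$). Its weight is $W=W[\Pi_1]\prod_{i=1}^{N-1}W[\Pi_{i+1}|\Pi_i]$, where $W[\Pi_1]$ is the product over the steps of $\Pi_1$ of $p$ for each step $(y,s)\to(y+1,s+1)$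 and $q$ for each step $(y,s)\to(y,s+1)$; and $W[\Pi_{i+1}|\Pi_i]$ is the product over the steps of $\Pi_{i+1}$ of the factors: for a step $(y,s)\to(y+1,s+1)$, the factor is $p$ if $(y+1,s+1)\notin\Pi_i$ and $0$ if $(y+1,s+1)\in\Pi_i$; for a step $(y,s)\to(y,s+1)$, the factor is $q$ if $(y+1,s+1)\notin\Pi_i$ and $1$ if $(y+1,s+1)\in\Pi_i$. The generalized Green function $G((\mathbf{x},\mathbf{t})|(\mathbf{x}^0,\mathbf{t}^0))$ is the sum of the weights of all such $N$-paths. For $n,x\in\mathbb{Z}$: $F_n(x,t)=\frac{1}{2\pi i}\oint_{\Gamma_0}\frac{dw}{w}\left(q+\frac{p}{w}\right)^t(1-w)^{-n}w^x$ for $t\ge 0$, and $F_n(x,t)=0$ for $t<0$, where $\Gamma_0$ is a positively oriented contour encircling the origin and leaving $w=1$ outside. *)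

theory Defs
  imports "HOL-Complex_Analysis.Complex_Analysis" "Jordan_Normal_Form.Determinant"
begin

text \<open>Configurations are indexed 1..N: particle i sits at (x i, t i) (space, time).\<close>

definition admissible :: "nat \<Rightarrow> (nat \<Rightarrow> int) \<Rightarrow> (nat \<Rightarrow> int) \<Rightarrow> bool" where
  "admissible N x t \<longleftrightarrow> (\<forall>i\<in>{1..<N}. x i > x (i+1) \<and> t i \<le> t (i+1))"

text \<open>A directed lattice path from (a,s) to (b,s') is encoded by the list ys of its
  space coordinates: the k-th point is (ys!k, s+k), k = 0..s'-s.\<close>

definition lattice_path :: "int \<Rightarrow> int \<Rightarrow> int \<Rightarrow> int \<Rightarrow> int list \<Rightarrow> bool" where
  "lattice_path a s b s' ys \<longleftrightarrow> s < s' \<and> length ys = nat (s' - s) + 1 \<and>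
     ys ! 0 = a \<and> ys ! nat (s' - s) = b \<and>
     (\<forall>k < nat (s' - s). ys ! (k+1) - ys ! k \<in> {0, 1})"

definition path_points :: "int \<Rightarrow> int list \<Rightarrow> (int \<times> int) set" where
  "path_points s ys = {(ys ! k, s + int k) | k. k < length ys}"

definition W_first :: "real \<Rightarrow> real \<Rightarrow> int list \<Rightarrow> real" where
  "W_first p q ys = (\<Prod>k < length ys - 1. if ys ! (k+1) = ys ! k + 1 then p else q)"

text \<open>Conditional weight W[Pi_{i+1} | Pi_i]: path ys starting at time s, previous path zs
  starting at time s0.\<close>
definition W_cond :: "real \<Rightarrow> real \<Rightarrow> int \<Rightarrow> int list \<Rightarrow> int \<Rightarrow> int list \<Rightarrow> real" where
  "W_cond p q s ys s0 zs = (\<Prod>k < length ys - 1.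
     (if (ys ! k + 1, s + int k + 1) \<in> path_points s0 zs
      then (if ys ! (k+1) = ys ! k + 1 then 0 else 1)
      else (if ys ! (k+1) = ys ! k + 1 then p else q)))"

definition N_paths :: "nat \<Rightarrow> (nat \<Rightarrow> int) \<Rightarrow> (nat \<Rightarrow> int) \<Rightarrow> (nat \<Rightarrow> int) \<Rightarrow> (nat \<Rightarrow> int)
    \<Rightarrow> (nat \<Rightarrow> int list) set" where
  "N_paths N x t x0 t0 = {P. (\<forall>i\<in>{1..N}. lattice_path (x0 i) (t0 i) (x i) (t i) (P i)) \<and>
                            (\<forall>i. i \<notin> {1..N} \<longrightarrow> P i = [])}"

definition N_path_weight :: "real \<Rightarrow> real \<Rightarrow> nat \<Rightarrow> (nat \<Rightarrow> int) \<Rightarrow> (nat \<Rightarrow> int list) \<Rightarrow> real" where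
  "N_path_weight p q N t0 P =
     W_first p q (P 1) * (\<Prod>i\<in>{1..<N}. W_cond p q (t0 (i+1)) (P (i+1)) (t0 i) (P i))"

definition green :: "real \<Rightarrow> real \<Rightarrow> nat \<Rightarrow> (nat \<Rightarrow> int) \<Rightarrow> (nat \<Rightarrow> int) \<Rightarrow> (nat \<Rightarrow> int) \<Rightarrow> (nat \<Rightarrow> int) \<Rightarrow> real" where
  "green p q N x t x0 t0 = (\<Sum>P\<in>N_paths N x t x0 t0. N_path_weight p q N t0 P)"

text \<open>F_n(x,t); the contour Gamma_0 is taken to be the circle of radius 1/2 around 0.\<close>
definition F_fun :: "real \<Rightarrow> real \<Rightarrow> int \<Rightarrow> int \<Rightarrow> int \<Rightarrow> complex" where
  "F_fun p q n x t = (if t < 0 then 0 else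
     contour_integral (circlepath 0 (1/2))
       (\<lambda>w. (complex_of_real q + complex_of_real p / w) ^ nat t * (1 - w) powi (- n) * w powi x / w)
     / (2 * complex_of_real pi * \<i>))"

end

theory Submission
  imports Defs
begin

text \<open>Both sides satisfy the same recursion, which is run on sums over walks (lattice paths
  that may have length zero).  If some particle starts before \<open>t 1\<close>, the leftmost particle \<open>k\<close>
  with the earliest starting time takes its first step: the walk sum becomes \<open>p\<close> times the sum
  with the starting point \<open>(x0 k, t0 k)\<close> moved to \<open>(x0 k + 1, t0 k + 1)\<close> plus \<open>q\<close> times the sum
  with it moved to \<open>(x0 k, t0 k + 1)\<close>, except that a jump onto the starting point of particle
  \<open>k - 1\<close> has weight 0 and waiting then has weight 1.  The determinant obeys the same identity,
  because its \<open>k\<close>-th column satisfies \<open>F_n(y, s) = p F_n(y - 1, s - 1) + q F_n(y, s - 1)\<close>, and in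
  the blocked case \<open>F_n(y, s) = F_(n+1)(y, s) - F_(n+1)(y + 1, s)\<close> makes the two determinants
  equal.  If no particle starts before \<open>t 1\<close>, particle 1 has already arrived and both sides
  reduce to \<open>N - 1\<close> particles.  The two kernel identities come from the contour integral, which
  at time 0 is the coefficient of \<open>w ^ (-y)\<close> in \<open>(1 - w) powi (-n)\<close>.\<close>

section \<open>The kernel F\<close>

text \<open>The Taylor coefficient of \<open>w ^ m\<close> in \<open>(1 - w) powi (-n)\<close>.\<close>

definition inv_pow_coeff :: "int \<Rightarrow> int \<Rightarrow> real" where
  "inv_pow_coeff n m = (if m < 0 then 0 else pochhammer (of_int n) (nat m) / fact (nat m))"

fun F_nat :: "real \<Rightarrow> real \<Rightarrow> int \<Rightarrow> int \<Rightarrow> nat \<Rightarrow> real" where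
  "F_nat p q n y 0 = inv_pow_coeff n (- y)"
| "F_nat p q n y (Suc s) = p * F_nat p q n (y - 1) s + q * F_nat p q n y s"

definition F_real :: "real \<Rightarrow> real \<Rightarrow> int \<Rightarrow> int \<Rightarrow> int \<Rightarrow> real" where
  "F_real p q n y s = (if s < 0 then 0 else F_nat p q n y (nat s))"

definition F_integrand :: "real \<Rightarrow> real \<Rightarrow> int \<Rightarrow> int \<Rightarrow> nat \<Rightarrow> complex \<Rightarrow> complex" where
  "F_integrand p q n y s w =
     (complex_of_real q + complex_of_real p / w) ^ s * (1 - w) powi (- n) * w powi y / w"

lemma higher_deriv_inv_pow:
  fixes w :: complex
  assumes "w \<noteq> 1"
  shows "(deriv ^^ m) (\<lambda>w. (1 - w) powi (- n)) w = pochhammer (of_int n) m * (1 - w) powi (- n - int m)"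
  using assms
proof (induction m arbitrary: w)
  case 0
  then show ?case by simp
next
  case (Suc m)
  have "\<forall>\<^sub>F z in nhds w. z \<in> - {1}"
    by (rule eventually_nhds_in_open) (use Suc.prems in auto)
  then have ev: "\<forall>\<^sub>F z in nhds w.
      (deriv ^^ m) (\<lambda>w. (1 - w) powi (- n)) z = pochhammer (of_int n) m * (1 - z) powi (- n - int m)"
    by (rule eventually_mono) (use Suc.IH in auto)
  have "((\<lambda>z. pochhammer (of_int n) m * (1 - z) powi (- n - int m)) has_field_derivative
      pochhammer (of_int n) m * (of_int (- n - int m) * (1 - w) powi (- n - int m - 1) * (- 1))) (at w)"
    using Suc.prems by (auto intro!: derivative_eq_intros)
  then have "(deriv ^^ Suc m) (\<lambda>w. (1 - w) powi (- n)) w =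
      pochhammer (of_int n) m * (of_int (- n - int m) * (1 - w) powi (- n - int m - 1) * (- 1))"
    by (simp add: deriv_cong_ev[OF ev refl] DERIV_imp_deriv)
  also have "\<dots> = pochhammer (of_int n) (Suc m) * (1 - w) powi (- n - int (Suc m))"
    by (simp add: pochhammer_Suc algebra_simps)
  finally show ?case .
qed

lemma sphere_half_nonzero: "w \<in> path_image (circlepath 0 (1/2)) \<Longrightarrow> w \<noteq> (0::complex)"
  by (auto simp: path_image_circlepath)

text \<open>At time 0 the integral picks the coefficient of \<open>w ^ (-y)\<close>: the integrand is holomorphic
  inside the circle when \<open>y \<ge> 1\<close>, and Cauchy's formula for the \<open>-y\<close>-th derivative applies otherwise.\<close>

lemma F_integrand_time_0_has_contour_integral:
  "(F_integrand p q n y 0 has_contour_integral 2 * pi * \<i> * inv_pow_coeff n (- y)) (circlepath 0 (1/2))"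
proof (cases "y \<ge> 1")
  case True
  have "((\<lambda>w. (1 - w) powi (- n) * w ^ nat (y - 1)) has_contour_integral 0) (circlepath 0 (1/2))"
    by (rule Cauchy_theorem_disc_simple[of _ 0 1])
      (auto intro!: holomorphic_intros simp: dist_norm path_image_circlepath)
  moreover have "(1 - w) powi (- n) * w ^ nat (y - 1) = F_integrand p q n y 0 w"
    if "w \<in> path_image (circlepath 0 (1/2))" for w
  proof -
    have "w powi y = w powi (y - 1) * w"
      using sphere_half_nonzero[OF that] by (simp add: power_int_minus_mult)
    then show ?thesis
      using True sphere_half_nonzero[OF that] by (simp add: F_integrand_def power_int_def)
  qed
  ultimately have "(F_integrand p q n y 0 has_contour_integral 0) (circlepath 0 (1/2))"
    by (rule has_contour_integral_eq)
  then show ?thesis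
    using True by (simp add: inv_pow_coeff_def)
next
  case False
  define m where "m = nat (- y)"
  have y: "y = - int m" using False by (simp add: m_def)
  have "((\<lambda>w. (1 - w) powi (- n) / (w - 0) ^ Suc m) has_contour_integral
      2 * pi * \<i> / fact m * (deriv ^^ m) (\<lambda>w. (1 - w) powi (- n)) 0) (circlepath 0 (1/2))"
    by (intro Cauchy_has_contour_integral_higher_derivative_circlepath continuous_intros
        holomorphic_intros) (auto simp: dist_norm)
  moreover have "(1 - w) powi (- n) / (w - 0) ^ Suc m = F_integrand p q n y 0 w"
    if "w \<in> path_image (circlepath 0 (1/2))" for w
    using sphere_half_nonzero[OF that]
    by (simp add: F_integrand_def y power_int_minus divide_inverse mult.commute)
  ultimately have "(F_integrand p q n y 0 has_contour_integral
      2 * pi * \<i> / fact m * (deriv ^^ m) (\<lambda>w. (1 - w) powi (- n)) 0) (circlepath 0 (1/2))"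
    by (rule has_contour_integral_eq)
  then show ?thesis
    using False by (simp add: higher_deriv_inv_pow inv_pow_coeff_def m_def flip: pochhammer_of_real)
qed

lemma F_integrand_has_contour_integral:
  "(F_integrand p q n y s has_contour_integral 2 * pi * \<i> * F_nat p q n y s) (circlepath 0 (1/2))"
proof (induction s arbitrary: y)
  case 0
  show ?case using F_integrand_time_0_has_contour_integral by simp
next
  case (Suc s)
  have "((\<lambda>w. p * F_integrand p q n (y - 1) s w + q * F_integrand p q n y s w) has_contour_integral
      p * (2 * pi * \<i> * F_nat p q n (y - 1) s) + q * (2 * pi * \<i> * F_nat p q n y s))
      (circlepath 0 (1/2))"
    by (intro has_contour_integral_add has_contour_integral_lmul Suc.IH)
  moreover have "p * F_integrand p q n (y - 1) s w + q * F_integrand p q n y s w =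
      F_integrand p q n y (Suc s) w" if "w \<in> path_image (circlepath 0 (1/2))" for w
  proof -
    have "w powi y = w powi (y - 1) * w"
      using sphere_half_nonzero[OF that] by (simp add: power_int_minus_mult)
    then show ?thesis
      using sphere_half_nonzero[OF that] by (simp add: F_integrand_def field_simps)
  qed
  ultimately have "(F_integrand p q n y (Suc s) has_contour_integral
      p * (2 * pi * \<i> * F_nat p q n (y - 1) s) + q * (2 * pi * \<i> * F_nat p q n y s))
      (circlepath 0 (1/2))"
    by (rule has_contour_integral_eq)
  then show ?case
    by (simp add: algebra_simps)
qed

lemma F_fun_eq_F_real: "F_fun p q n y s = complex_of_real (F_real p q n y s)"
proof (cases "s < 0")
  case False
  have "contour_integral (circlepath 0 (1/2)) (F_integrand p q n y (nat s)) =
      2 * pi * \<i> * F_nat p q n y (nat s)"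
    by (rule contour_integral_unique[OF F_integrand_has_contour_integral])
  then show ?thesis
    using False by (simp add: F_fun_def F_real_def F_integrand_def[abs_def])
qed (simp add: F_fun_def F_real_def)

text \<open>The coefficient form of \<open>(1 - w) powi (-n) = (1 - w) * (1 - w) powi (-(n + 1))\<close>.\<close>

lemma inv_pow_coeff_pascal: "inv_pow_coeff n m = inv_pow_coeff (n + 1) m - inv_pow_coeff (n + 1) (m - 1)"
proof (cases "m \<le> 0")
  case True
  then show ?thesis by (cases "m = 0") (auto simp: inv_pow_coeff_def)
next
  case False
  define k where "k = nat m - 1"
  have m: "nat m = Suc k" "m - 1 = int k" "\<not> m < 0" using False unfolding k_def by auto
  define P where "P = pochhammer (of_int n + 1 :: real) k"
  have fact_Suc_k: "(fact (Suc k) :: real) = of_nat (Suc k) * fact k" by (simp add: fact_Suc)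
  have "inv_pow_coeff (n + 1) m - inv_pow_coeff (n + 1) (m - 1) =
      pochhammer (of_int n + 1) (Suc k) / fact (Suc k) - P / fact k"
    unfolding inv_pow_coeff_def P_def using m by simp
  also have "pochhammer (of_int n + 1) (Suc k) = P * (of_int n + 1 + of_nat k)"
    unfolding P_def by (simp add: pochhammer_Suc)
  also have "P / fact k = P * of_nat (Suc k) / fact (Suc k)"
    unfolding fact_Suc_k by simp
  also have "P * (of_int n + 1 + of_nat k) / fact (Suc k) - P * of_nat (Suc k) / fact (Suc k) =
      (P * (of_int n + 1 + of_nat k) - P * of_nat (Suc k)) / fact (Suc k)"
    by (rule diff_divide_distrib[symmetric])
  also have "P * (of_int n + 1 + of_nat k) - P * of_nat (Suc k) = pochhammer (of_int n) (Suc k)"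
    unfolding P_def by (simp add: pochhammer_rec algebra_simps)
  finally show ?thesis unfolding inv_pow_coeff_def using m by simp
qed

lemma F_nat_pascal: "F_nat p q n y s = F_nat p q (n + 1) y s - F_nat p q (n + 1) (y + 1) s"
proof (induction s arbitrary: y)
  case 0
  then show ?case using inv_pow_coeff_pascal[of n "- y"] by simp
next
  case (Suc s)
  have shifted: "F_nat p q n (y - 1) s = F_nat p q (n + 1) (y - 1) s - F_nat p q (n + 1) y s"
    using Suc.IH[of "y - 1"] by simp
  show ?case unfolding F_nat.simps shifted Suc.IH[of y] by (simp add: algebra_simps)
qed

lemma F_real_pascal: "F_real p q n y s = F_real p q (n + 1) y s - F_real p q (n + 1) (y + 1) s"
  unfolding F_real_def using F_nat_pascal[of p q n y] by simp

lemma F_real_time_step: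
  assumes "s \<ge> 1"
  shows "F_real p q n y s = p * F_real p q n (y - 1) (s - 1) + q * F_real p q n y (s - 1)"
proof -
  have "nat s = Suc (nat (s - 1))" using assms by simp
  then show ?thesis using assms unfolding F_real_def by simp
qed

lemma F_real_negative_time: "s < 0 \<Longrightarrow> F_real p q n y s = 0"
  by (simp add: F_real_def)

lemma F_real_time_0_pos: "y > 0 \<Longrightarrow> F_real p q n y 0 = 0"
  by (simp add: F_real_def inv_pow_coeff_def)

lemma F_real_time_0_index_0: "F_real p q 0 y 0 = (if y = 0 then 1 else 0)"
  by (auto simp: F_real_def inv_pow_coeff_def pochhammer_0_left)

text \<open>For \<open>n \<le> 0\<close>, \<open>(1 - w) powi (-n)\<close> is a polynomial of degree \<open>-n\<close>.\<close>

lemma F_real_vanish: "n \<le> 0 \<Longrightarrow> y < n \<Longrightarrow> F_real p q n y s = 0"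
proof -
  assume "n \<le> 0" "y < n"
  then have "F_nat p q n y s = 0" for s
  proof (induction s arbitrary: y)
    case 0
    have "pochhammer (of_int n :: real) (nat (- y)) = 0"
      unfolding pochhammer_eq_0_iff by (rule exI[of _ "nat (- n)"]) (use 0 in auto)
    then show ?case by (simp add: inv_pow_coeff_def)
  qed simp
  then show ?thesis by (simp add: F_real_def)
qed

section \<open>Determinant identities\<close>

lemma det_linear_col:
  fixes A B C :: "nat \<Rightarrow> nat \<Rightarrow> 'a::comm_ring_1"
  assumes k: "k < n"
    and col_k: "\<And>i. i < n \<Longrightarrow> A i k = a * B i k + b * C i k"
    and other_B: "\<And>i j. i < n \<Longrightarrow> j < n \<Longrightarrow> j \<noteq> k \<Longrightarrow> A i j = B i j"
    and other_C: "\<And>i j. i < n \<Longrightarrow> j < n \<Longrightarrow> j \<noteq> k \<Longrightarrow> A i j = C i j"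
  shows "det (mat n n (\<lambda>(i, j). A i j)) =
    a * det (mat n n (\<lambda>(i, j). B i j)) + b * det (mat n n (\<lambda>(i, j). C i j))"
proof -
  have det_eq: "det (mat n n (\<lambda>(i, j). X i j)) =
      (\<Sum>\<pi> | \<pi> permutes {0..<n}. signof \<pi> * (\<Prod>j<n. X (\<pi> j) j))" for X :: "nat \<Rightarrow> nat \<Rightarrow> 'a"
    by (subst det_col[of _ n]) (auto intro!: sum.cong prod.cong simp: permutes_in_image)
  have "signof \<pi> * (\<Prod>j<n. A (\<pi> j) j) =
      a * (signof \<pi> * (\<Prod>j<n. B (\<pi> j) j)) + b * (signof \<pi> * (\<Prod>j<n. C (\<pi> j) j))"
    if \<pi>: "\<pi> permutes {0..<n}" for \<pi>
  proof -
    have \<pi>_less: "\<pi> j < n" if "j < n" for j using permutes_in_image[OF \<pi>] that by auto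
    have remove_k: "(\<Prod>j<n. X (\<pi> j) j) = X (\<pi> k) k * (\<Prod>j\<in>{..<n} - {k}. X (\<pi> j) j)"
      for X :: "nat \<Rightarrow> nat \<Rightarrow> 'a"
      by (rule prod.remove) (use k in auto)
    have "(\<Prod>j\<in>{..<n} - {k}. A (\<pi> j) j) = (\<Prod>j\<in>{..<n} - {k}. B (\<pi> j) j)"
      "(\<Prod>j\<in>{..<n} - {k}. A (\<pi> j) j) = (\<Prod>j\<in>{..<n} - {k}. C (\<pi> j) j)"
      by (auto intro!: prod.cong other_B other_C \<pi>_less)
    then show ?thesis
      using col_k[OF \<pi>_less[OF k]] by (simp add: remove_k algebra_simps)
  qed
  then show ?thesis
    unfolding det_eq by (simp add: sum.distrib sum_distrib_left)
qed

lemma det_add_col_to_col: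
  fixes A B :: "nat \<Rightarrow> nat \<Rightarrow> 'a::comm_ring_1"
  assumes "k < n" "l < n" "k \<noteq> l"
    and "\<And>i. i < n \<Longrightarrow> B i k = A i l + A i k"
    and "\<And>i j. i < n \<Longrightarrow> j < n \<Longrightarrow> j \<noteq> k \<Longrightarrow> B i j = A i j"
  shows "det (mat n n (\<lambda>(i, j). B i j)) = det (mat n n (\<lambda>(i, j). A i j))"
proof -
  have "mat n n (\<lambda>(i, j). B i j) = addcol 1 k l (mat n n (\<lambda>(i, j). A i j))"
    by (rule eq_matI) (use assms in auto)
  then show ?thesis
    using assms(1-3) by simp
qed

lemma det_first_row_unit:
  fixes A :: "nat \<Rightarrow> nat \<Rightarrow> 'a::comm_ring_1"
  assumes n: "0 < n" and zero: "\<And>j. 0 < j \<Longrightarrow> j < n \<Longrightarrow> A 0 j = 0"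
  shows "det (mat n n (\<lambda>(i, j). A i j)) = A 0 0 * det (mat (n - 1) (n - 1) (\<lambda>(i, j). A (Suc i) (Suc j)))"
proof -
  let ?M = "mat n n (\<lambda>(i, j). A i j)"
  have minor: "mat_delete ?M 0 0 = mat (n - 1) (n - 1) (\<lambda>(i, j). A (Suc i) (Suc j))"
    unfolding mat_delete_def by (rule eq_matI) auto
  have "det ?M = (\<Sum>j<n. ?M $$ (0, j) * cofactor ?M 0 j)"
    by (rule laplace_expansion_row) (use n in auto)
  also have "\<dots> = (\<Sum>j\<in>{0}. ?M $$ (0, j) * cofactor ?M 0 j)"
    by (rule sum.mono_neutral_right) (use n zero in auto)
  finally show ?thesis
    using n minor by (simp add: cofactor_def)
qed

lemma det_zero_row:
  fixes A :: "nat \<Rightarrow> nat \<Rightarrow> 'a::comm_ring_1"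
  assumes "r < n" "\<And>j. j < n \<Longrightarrow> A r j = 0"
  shows "det (mat n n (\<lambda>(i, j). A i j)) = 0"
  by (subst laplace_expansion_row[of _ n r]) (use assms in auto)

lemma det_zero_col:
  fixes A :: "nat \<Rightarrow> nat \<Rightarrow> 'a::comm_ring_1"
  assumes "c < n" "\<And>i. i < n \<Longrightarrow> A i c = 0"
  shows "det (mat n n (\<lambda>(i, j). A i j)) = 0"
  by (subst laplace_expansion_column[of _ n c]) (use assms in auto)

section \<open>Walks and their weights\<close>

text \<open>Unlike a lattice path, a walk may have length zero: zero-length walks arise once a particle
  has been advanced to its final time.\<close>

definition lattice_walk :: "int \<Rightarrow> int \<Rightarrow> int \<Rightarrow> int \<Rightarrow> int list \<Rightarrow> bool" where
  "lattice_walk a s b s' ys \<longleftrightarrow> s \<le> s' \<and> length ys = nat (s' - s) + 1 \<and>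
     ys ! 0 = a \<and> ys ! nat (s' - s) = b \<and>
     (\<forall>k < nat (s' - s). ys ! (k+1) - ys ! k \<in> {0, 1})"

lemma lattice_path_iff_walk: "s < s' \<Longrightarrow> lattice_path a s b s' ys \<longleftrightarrow> lattice_walk a s b s' ys"
  unfolding lattice_path_def lattice_walk_def by auto

lemma lattice_walk_same_time: "lattice_walk a s b s ys \<longleftrightarrow> ys = [a] \<and> a = b"
  unfolding lattice_walk_def by (cases ys) auto

lemma lattice_walk_hd: "lattice_walk a s b s' ys \<Longrightarrow> ys \<noteq> [] \<and> hd ys = a"
  unfolding lattice_walk_def by (cases ys) auto

lemma lattice_walk_first_step:
  assumes "lattice_walk a s b s' ys" "s < s'"
  shows "ys = a # tl ys \<and> tl ys \<noteq> [] \<and> hd (tl ys) - a \<in> {0, 1} \<and>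
    lattice_walk (hd (tl ys)) (s + 1) b s' (tl ys)"
proof -
  define L where "L = nat (s' - s)"
  have L: "L \<ge> 1" "nat (s' - (s + 1)) = L - 1" using assms(2) unfolding L_def by auto
  have len: "length ys = L + 1" and y0: "ys ! 0 = a" and yL: "ys ! L = b"
    and step: "\<And>k. k < L \<Longrightarrow> ys ! (k+1) - ys ! k \<in> {0, 1}"
    using assms(1) unfolding lattice_walk_def L_def by auto
  have ys: "ys = a # tl ys" using len y0 by (cases ys) auto
  have tl_ne: "tl ys \<noteq> []" using len L by (cases ys) auto
  then have hd_tl: "hd (tl ys) = ys ! 1" by (cases ys) (auto simp: hd_conv_nth)
  have "lattice_walk (hd (tl ys)) (s + 1) b s' (tl ys)"
    unfolding lattice_walk_def L(2) using assms(2) len L yL step by (auto simp: hd_tl nth_tl)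
  moreover have "hd (tl ys) - a \<in> {0, 1}" using step[of 0] L y0 hd_tl by simp
  ultimately show ?thesis using ys tl_ne by blast
qed

lemma lattice_walk_Cons:
  assumes "lattice_walk a' (s + 1) b s' ys" "a' - a \<in> {0, 1}"
  shows "lattice_walk a s b s' (a # ys)"
proof -
  define L where "L = nat (s' - (s + 1))"
  have len: "length ys = L + 1" and y0: "ys ! 0 = a'" and yL: "ys ! L = b"
    and step: "\<And>k. k < L \<Longrightarrow> ys ! (k+1) - ys ! k \<in> {0, 1}" and le: "s + 1 \<le> s'"
    using assms(1) unfolding lattice_walk_def L_def by auto
  have L': "nat (s' - s) = Suc L" unfolding L_def using le by simp
  have "(a # ys) ! (k+1) - (a # ys) ! k \<in> {0, 1}" if "k < Suc L" for k
    using assms(2) y0 step[of "k - 1"] that by (cases k) auto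
  then show ?thesis unfolding lattice_walk_def L' using le len yL by auto
qed

lemma lattice_walk_set:
  assumes "lattice_walk a s b s' ys"
  shows "set ys \<subseteq> {a .. a + (s' - s)}"
proof -
  define L where "L = nat (s' - s)"
  have len: "length ys = L + 1" and y0: "ys ! 0 = a"
    and step: "\<And>k. k < L \<Longrightarrow> ys ! (k+1) - ys ! k \<in> {0, 1}" and le: "s \<le> s'"
    using assms unfolding lattice_walk_def L_def by auto
  have bounds: "a \<le> ys ! k \<and> ys ! k \<le> a + int k" if "k \<le> L" for k
    using that
  proof (induction k)
    case (Suc k)
    then show ?case using step[of k] by auto
  qed (simp add: y0)
  show ?thesis
  proof
    fix z assume "z \<in> set ys"
    then obtain k where "k < length ys" "z = ys ! k" by (auto simp: in_set_conv_nth)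
    then show "z \<in> {a .. a + (s' - s)}" using bounds[of k] len le unfolding L_def by auto
  qed
qed

lemma finite_lattice_walks: "finite {ys. lattice_walk a s b s' ys}"
proof (rule finite_subset)
  show "{ys. lattice_walk a s b s' ys} \<subseteq>
      {ys. set ys \<subseteq> {a .. a + (s' - s)} \<and> length ys = nat (s' - s) + 1}"
    using lattice_walk_set by (auto simp: lattice_walk_def)
qed (rule finite_lists_length_eq, simp)

definition walk_tuples :: "nat \<Rightarrow> (nat \<Rightarrow> int) \<Rightarrow> (nat \<Rightarrow> int) \<Rightarrow> (nat \<Rightarrow> int) \<Rightarrow> (nat \<Rightarrow> int)
    \<Rightarrow> (nat \<Rightarrow> int list) set" where
  "walk_tuples N x t x0 t0 = {P. (\<forall>i\<in>{1..N}. lattice_walk (x0 i) (t0 i) (x i) (t i) (P i)) \<and>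
                                 (\<forall>i. i \<notin> {1..N} \<longrightarrow> P i = [])}"

definition walk_green :: "real \<Rightarrow> real \<Rightarrow> nat \<Rightarrow> (nat \<Rightarrow> int) \<Rightarrow> (nat \<Rightarrow> int) \<Rightarrow> (nat \<Rightarrow> int)
    \<Rightarrow> (nat \<Rightarrow> int) \<Rightarrow> real" where
  "walk_green p q N x t x0 t0 = (\<Sum>P\<in>walk_tuples N x t x0 t0. N_path_weight p q N t0 P)"

lemma green_eq_walk_green:
  "\<forall>i\<in>{1..N}. t0 i < t i \<Longrightarrow> green p q N x t x0 t0 = walk_green p q N x t x0 t0"
  unfolding green_def walk_green_def N_paths_def walk_tuples_def
  by (auto intro!: sum.cong simp: lattice_path_iff_walk)

lemma finite_walk_tuples: "finite (walk_tuples N x t x0 t0)"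
proof -
  let ?W = "\<lambda>i. {ys. lattice_walk (x0 i) (t0 i) (x i) (t i) ys}"
  let ?ext = "\<lambda>P i. if i \<in> {1..N} then P i else ([]::int list)"
  have "walk_tuples N x t x0 t0 \<subseteq> ?ext ` PiE {1..N} ?W"
  proof
    fix P assume P: "P \<in> walk_tuples N x t x0 t0"
    then have "P = ?ext (restrict P {1..N})" unfolding walk_tuples_def by (auto simp: fun_eq_iff)
    moreover have "restrict P {1..N} \<in> PiE {1..N} ?W" using P unfolding walk_tuples_def by auto
    ultimately show "P \<in> ?ext ` PiE {1..N} ?W" by blast
  qed
  moreover have "finite (?ext ` PiE {1..N} ?W)"
    by (intro finite_imageI finite_PiE) (auto simp: finite_lattice_walks)
  ultimately show ?thesis by (rule finite_subset)
qed

lemma walk_green_0: "walk_green p q 0 x t x0 t0 = 1"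
proof -
  have "walk_tuples 0 x t x0 t0 = {\<lambda>i. []}" unfolding walk_tuples_def by auto
  then show ?thesis unfolding walk_green_def N_path_weight_def W_first_def by simp
qed

lemma path_points_Cons: "path_points s (a # ys) = insert (a, s) (path_points (s + 1) ys)"
proof -
  have "path_points s (a # ys) = (\<lambda>k. ((a # ys) ! k, s + int k)) ` {..<Suc (length ys)}"
    unfolding path_points_def by auto
  also have "\<dots> = insert (a, s) ((\<lambda>k. (ys ! k, s + 1 + int k)) ` {..<length ys})"
    by (simp add: lessThan_Suc_eq_insert_0 image_image add.assoc)
  also have "(\<lambda>k. (ys ! k, s + 1 + int k)) ` {..<length ys} = path_points (s + 1) ys"
    unfolding path_points_def by auto
  finally show ?thesis .
qed

lemma W_first_Cons:
  "W_first p q (a # y # ys) = (if y = a + 1 then p else q) * W_first p q (y # ys)"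
  unfolding W_first_def by (simp add: prod.lessThan_Suc_shift del: prod.lessThan_Suc)

lemma W_cond_Cons:
  "W_cond p q s (a # y # ys) s0 zs =
    (if (a + 1, s + 1) \<in> path_points s0 zs
     then (if y = a + 1 then 0 else 1) else (if y = a + 1 then p else q))
    * W_cond p q (s + 1) (y # ys) s0 zs"
  unfolding W_cond_def
  by (simp add: prod.lessThan_Suc_shift add_Suc add_ac del: prod.lessThan_Suc cong: if_cong)

lemma W_cond_cong:
  assumes "\<And>z. snd z > s \<Longrightarrow> z \<in> path_points s0 zs \<longleftrightarrow> z \<in> path_points s0' zs'"
  shows "W_cond p q s ys s0 zs = W_cond p q s ys s0' zs'"
  unfolding W_cond_def by (rule prod.cong[OF refl]) (simp add: assms)

lemma W_cond_eq_W_first: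
  assumes "\<And>z. z \<in> path_points s0 zs \<Longrightarrow> snd z \<le> s"
  shows "W_cond p q s ys s0 zs = W_first p q ys"
  unfolding W_cond_def W_first_def by (rule prod.cong[OF refl]) (use assms in force)

lemma path_points_start: "ys \<noteq> [] \<Longrightarrow> (a, s) \<in> path_points s ys \<longleftrightarrow> a = ys ! 0"
  unfolding path_points_def by auto

definition path_factor :: "real \<Rightarrow> real \<Rightarrow> (nat \<Rightarrow> int) \<Rightarrow> (nat \<Rightarrow> int list) \<Rightarrow> nat \<Rightarrow> real" where
  "path_factor p q t0 P i =
     (if i = 1 then W_first p q (P 1) else W_cond p q (t0 i) (P i) (t0 (i - 1)) (P (i - 1)))"

lemma N_path_weight_eq_prod:
  assumes "1 \<le> N"
  shows "N_path_weight p q N t0 P = (\<Prod>i\<in>{1..N}. path_factor p q t0 P i)"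
proof -
  have "(\<Prod>i\<in>{1..<N}. path_factor p q t0 P (Suc i)) = (\<Prod>i\<in>{Suc 1..<Suc N}. path_factor p q t0 P i)"
    by (simp only: prod.atLeast_Suc_lessThan_Suc_shift comp_def)
  also have "{Suc 1..<Suc N} = {Suc 1..N}" by auto
  finally show ?thesis
    using assms by (simp add: N_path_weight_def prod.atLeast_Suc_atMost path_factor_def)
qed

text \<open>Only the factors of the \<open>k\<close>-th and \<open>(k + 1)\<close>-th walks are affected: the first step of the
  \<open>k\<close>-th walk is blocked iff the left neighbour starts at its target point, and the \<open>(k + 1)\<close>-th
  walk, starting no earlier than \<open>t0 k\<close>, never sees the removed point \<open>(x0 k, t0 k)\<close>.\<close>

lemma N_path_weight_first_step:
  assumes P: "P \<in> walk_tuples N x t x0 t0"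
    and k: "k \<in> {1..N}" and tk: "t0 k < t k"
    and right: "k < N \<Longrightarrow> t0 k \<le> t0 (k + 1)"
    and left: "1 < k \<Longrightarrow> t0 (k - 1) = t0 k + 1"
    and d: "d \<in> {0, 1}" and first_step: "hd (tl (P k)) = x0 k + d"
  defines "blocked \<equiv> 1 < k \<and> x0 (k - 1) = x0 k + 1"
  shows "N_path_weight p q N t0 P =
    (if d = 1 then (if blocked then 0 else p) else (if blocked then 1 else q)) *
    N_path_weight p q N (t0(k := t0 k + 1)) (P(k := tl (P k)))"
proof -
  define \<phi> where "\<phi> = (if d = 1 then (if blocked then 0 else p) else (if blocked then 1 else q))"
  define P' where "P' = P(k := tl (P k))"
  define t0' where "t0' = t0(k := t0 k + 1)"
  have walk: "lattice_walk (x0 i) (t0 i) (x i) (t i) (P i)" if "i \<in> {1..N}" for i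
    using P that unfolding walk_tuples_def by auto
  obtain rest where Pk: "P k = x0 k # (x0 k + d) # rest"
    using lattice_walk_first_step[OF walk[OF k] tk] first_step by (metis list.collapse)
  have factor_k: "path_factor p q t0 P k = \<phi> * path_factor p q t0' P' k"
  proof (cases "k = 1")
    case True
    then show ?thesis
      using d Pk by (auto simp: path_factor_def W_first_Cons \<phi>_def blocked_def P'_def)
  next
    case False
    then have k1: "1 < k" and km: "k - 1 \<in> {1..N}" using k by auto
    have "P (k - 1) \<noteq> []" "P (k - 1) ! 0 = x0 (k - 1)"
      using lattice_walk_hd[OF walk[OF km]] walk[OF km] by (auto simp: lattice_walk_def)
    then have "(x0 k + 1, t0 k + 1) \<in> path_points (t0 (k - 1)) (P (k - 1)) \<longleftrightarrow> blocked"
      using path_points_start left[OF k1] k1 unfolding blocked_def by auto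
    then show ?thesis
      using k1 d by (auto simp: path_factor_def Pk W_cond_Cons \<phi>_def P'_def t0'_def)
  qed
  have factor_other: "path_factor p q t0 P i = path_factor p q t0' P' i" if "i \<in> {1..N} - {k}" for i
  proof (cases "i = k + 1")
    case True
    have "W_cond p q (t0 (k + 1)) (P (k + 1)) (t0 k) (P k) =
        W_cond p q (t0 (k + 1)) (P (k + 1)) (t0 k + 1) (tl (P k))"
      by (rule W_cond_cong) (use right True that in \<open>auto simp: Pk path_points_Cons\<close>)
    then show ?thesis
      using True k by (simp add: path_factor_def P'_def t0'_def)
  next
    case False
    then show ?thesis
      using that by (auto simp: path_factor_def P'_def t0'_def)
  qed
  have remove_k: "(\<Prod>i\<in>{1..N}. f i) = f k * (\<Prod>i\<in>{1..N} - {k}. f i)" for f :: "nat \<Rightarrow> real"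
    by (rule prod.remove) (use k in auto)
  have "(\<Prod>i\<in>{1..N}. path_factor p q t0 P i) =
      \<phi> * path_factor p q t0' P' k * (\<Prod>i\<in>{1..N} - {k}. path_factor p q t0' P' i)"
    by (simp only: remove_k factor_k prod.cong[OF refl factor_other])
  also have "\<dots> = \<phi> * (\<Prod>i\<in>{1..N}. path_factor p q t0' P' i)"
    by (simp only: remove_k mult.assoc)
  finally have "(\<Prod>i\<in>{1..N}. path_factor p q t0 P i) = \<phi> * (\<Prod>i\<in>{1..N}. path_factor p q t0' P' i)" .
  then show ?thesis
    using k by (simp add: N_path_weight_eq_prod \<phi>_def P'_def t0'_def)
qed

lemma walk_green_first_step_part:
  fixes x0 :: "nat \<Rightarrow> int"
  assumes k: "k \<in> {1..N}" and tk: "t0 k < t k"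
    and right: "k < N \<Longrightarrow> t0 k \<le> t0 (k + 1)"
    and left: "1 < k \<Longrightarrow> t0 (k - 1) = t0 k + 1"
    and d: "d \<in> {0, 1}"
  defines "blocked \<equiv> 1 < k \<and> x0 (k - 1) = x0 k + 1"
  shows "(\<Sum>P | P \<in> walk_tuples N x t x0 t0 \<and> hd (tl (P k)) = x0 k + d. N_path_weight p q N t0 P) =
    (if d = 1 then (if blocked then 0 else p) else (if blocked then 1 else q)) *
    walk_green p q N x t (x0(k := x0 k + d)) (t0(k := t0 k + 1))"
proof -
  let ?\<phi> = "if d = 1 then (if blocked then 0 else p) else (if blocked then 1 else q)"
  let ?t0' = "t0(k := t0 k + 1)"
  have "(\<Sum>P | P \<in> walk_tuples N x t x0 t0 \<and> hd (tl (P k)) = x0 k + d. N_path_weight p q N t0 P) =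
      (\<Sum>P'\<in>walk_tuples N x t (x0(k := x0 k + d)) ?t0'. ?\<phi> * N_path_weight p q N ?t0' P')"
  proof (rule sum.reindex_bij_witness[of _ "\<lambda>P'. P'(k := x0 k # P' k)" "\<lambda>P. P(k := tl (P k))"])
    fix P assume P: "P \<in> {P \<in> walk_tuples N x t x0 t0. hd (tl (P k)) = x0 k + d}"
    then have "lattice_walk (x0 k) (t0 k) (x k) (t k) (P k)"
      using k unfolding walk_tuples_def by auto
    from lattice_walk_first_step[OF this tk] have "P k = x0 k # tl (P k)"
      and "lattice_walk (hd (tl (P k))) (t0 k + 1) (x k) (t k) (tl (P k))" by auto
    then show "(P(k := tl (P k)))(k := x0 k # (P(k := tl (P k))) k) = P"
      and "P(k := tl (P k)) \<in> walk_tuples N x t (x0(k := x0 k + d)) ?t0'"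
      using P k unfolding walk_tuples_def by (auto simp: fun_eq_iff)
    show "?\<phi> * N_path_weight p q N ?t0' (P(k := tl (P k))) = N_path_weight p q N t0 P"
      using N_path_weight_first_step[where P = P and k = k and d = d and p = p and q = q] P
        k tk right left d
      unfolding blocked_def by auto
  next
    fix P' assume P': "P' \<in> walk_tuples N x t (x0(k := x0 k + d)) ?t0'"
    then have "lattice_walk (x0 k + d) (t0 k + 1) (x k) (t k) (P' k)"
      using k unfolding walk_tuples_def by force
    then have "lattice_walk (x0 k) (t0 k) (x k) (t k) (x0 k # P' k)" "hd (P' k) = x0 k + d"
      using lattice_walk_Cons lattice_walk_hd d by auto
    then show "P'(k := x0 k # P' k) \<in> {P \<in> walk_tuples N x t x0 t0. hd (tl (P k)) = x0 k + d}"
      using P' k unfolding walk_tuples_def by auto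
  qed simp
  then show ?thesis
    unfolding walk_green_def by (simp add: sum_distrib_left)
qed

lemma walk_green_first_step:
  fixes x0 :: "nat \<Rightarrow> int"
  assumes k: "k \<in> {1..N}" and tk: "t0 k < t k"
    and right: "k < N \<Longrightarrow> t0 k \<le> t0 (k + 1)"
    and left: "1 < k \<Longrightarrow> t0 (k - 1) = t0 k + 1"
  defines "blocked \<equiv> 1 < k \<and> x0 (k - 1) = x0 k + 1"
  shows "walk_green p q N x t x0 t0 =
    (if blocked then 0 else p) * walk_green p q N x t (x0(k := x0 k + 1)) (t0(k := t0 k + 1)) +
    (if blocked then 1 else q) * walk_green p q N x t x0 (t0(k := t0 k + 1))"
proof -
  let ?S = "\<lambda>d. {P. P \<in> walk_tuples N x t x0 t0 \<and> hd (tl (P k)) = x0 k + d}"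
  have "hd (tl (P k)) - x0 k \<in> {0, 1}" if "P \<in> walk_tuples N x t x0 t0" for P
    using that k lattice_walk_first_step[OF _ tk] unfolding walk_tuples_def by blast
  then have "walk_tuples N x t x0 t0 = ?S 1 \<union> ?S 0" by force
  then have "walk_green p q N x t x0 t0 = (\<Sum>P\<in>?S 1 \<union> ?S 0. N_path_weight p q N t0 P)"
    unfolding walk_green_def by simp
  also have "\<dots> = (\<Sum>P\<in>?S 1. N_path_weight p q N t0 P) + (\<Sum>P\<in>?S 0. N_path_weight p q N t0 P)"
    by (rule sum.union_disjoint) (auto intro: finite_subset[OF _ finite_walk_tuples])
  finally show ?thesis
    using walk_green_first_step_part[where d = 1] walk_green_first_step_part[where d = 0]
      k tk right left
    unfolding blocked_def by simp
qed

lemma N_path_weight_drop_first: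
  assumes N: "1 \<le> N" and P1: "P 1 = [a]" and P_after: "P (Suc N) = []"
    and t0_12: "2 \<le> N \<Longrightarrow> t0 1 \<le> t0 2"
  shows "N_path_weight p q N t0 P =
    N_path_weight p q (N - 1) (\<lambda>i. t0 (Suc i)) (\<lambda>i. if i = 0 then [] else P (Suc i))"
proof (cases "N = 1")
  case True
  then show ?thesis
    using P1 P_after by (simp add: N_path_weight_def W_first_def numeral_2_eq_2)
next
  case False
  let ?f = "path_factor p q t0 P"
  let ?g = "path_factor p q (\<lambda>i. t0 (Suc i)) (\<lambda>i. if i = 0 then [] else P (Suc i))"
  have N2: "2 \<le> N" "Suc (N - 1) = N" "1 \<le> N - 1" using N False by auto
  have shift: "?f (Suc i) = ?g i" if "i \<in> {1..N - 1}" for i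
  proof (cases "i = 1")
    case True
    have "W_cond p q (t0 2) (P 2) (t0 1) (P 1) = W_first p q (P 2)"
      by (rule W_cond_eq_W_first) (use P1 t0_12 N2 in \<open>auto simp: path_points_def\<close>)
    then show ?thesis
      using True by (simp add: path_factor_def numeral_2_eq_2)
  next
    case False
    then show ?thesis
      using that by (simp add: path_factor_def)
  qed
  have "(\<Prod>i\<in>{1..N}. ?f i) = ?f 1 * (\<Prod>i\<in>{Suc 1..Suc (N - 1)}. ?f i)"
    using N N2(2) by (simp only: prod.atLeast_Suc_atMost)
  also have "\<dots> = ?f 1 * (\<Prod>i\<in>{1..N - 1}. ?g i)"
    using shift by (simp only: prod.atLeast_Suc_atMost_Suc_shift comp_def cong: prod.cong)
  also have "?f 1 = 1"
    using P1 by (simp add: path_factor_def W_first_def)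
  finally show ?thesis
    using N N2(3) by (simp add: N_path_weight_eq_prod)
qed

lemma walk_green_drop_first:
  assumes N: "1 \<le> N" and t1: "t0 1 = t 1" and later: "\<forall>j\<in>{2..N}. t 1 \<le> t0 j"
  shows "walk_green p q N x t x0 t0 = (if x 1 = x0 1 then
    walk_green p q (N - 1) (\<lambda>i. x (Suc i)) (\<lambda>i. t (Suc i)) (\<lambda>i. x0 (Suc i)) (\<lambda>i. t0 (Suc i)) else 0)"
proof -
  have first_walk: "P 1 = [x0 1] \<and> x 1 = x0 1" if "P \<in> walk_tuples N x t x0 t0" for P
  proof -
    have "lattice_walk (x0 1) (t0 1) (x 1) (t 1) (P 1)"
      using that N unfolding walk_tuples_def by auto
    then show ?thesis
      unfolding t1 lattice_walk_same_time by simp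
  qed
  show ?thesis
  proof (cases "x 1 = x0 1")
    case False
    then have "walk_tuples N x t x0 t0 = {}"
      using first_walk by blast
    then show ?thesis
      using False unfolding walk_green_def by simp
  next
    case True
    let ?drop = "\<lambda>P i. if i = 0 then [] else P (Suc i)"
    let ?add = "\<lambda>P i. if i = 0 then [] else if i = 1 then [x0 1] else P (i - 1)"
    have t0_12: "2 \<le> N \<Longrightarrow> t0 1 \<le> t0 2"
      using later t1 by auto
    have "(\<Sum>P\<in>walk_tuples N x t x0 t0. N_path_weight p q N t0 P) =
        (\<Sum>P\<in>walk_tuples (N - 1) (\<lambda>i. x (Suc i)) (\<lambda>i. t (Suc i)) (\<lambda>i. x0 (Suc i)) (\<lambda>i. t0 (Suc i)).
          N_path_weight p q (N - 1) (\<lambda>i. t0 (Suc i)) P)"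
    proof (rule sum.reindex_bij_witness[of _ ?add ?drop])
      fix P assume P: "P \<in> walk_tuples N x t x0 t0"
      then have P_outside: "P 0 = []" "P (Suc N) = []" unfolding walk_tuples_def by auto
      then show "?add (?drop P) = P"
        using first_walk[OF P] by (auto simp: fun_eq_iff)
      show "?drop P \<in> walk_tuples (N - 1) (\<lambda>i. x (Suc i)) (\<lambda>i. t (Suc i)) (\<lambda>i. x0 (Suc i)) (\<lambda>i. t0 (Suc i))"
        using P unfolding walk_tuples_def by auto
      show "N_path_weight p q (N - 1) (\<lambda>i. t0 (Suc i)) (?drop P) = N_path_weight p q N t0 P"
        by (rule N_path_weight_drop_first[symmetric, where a = "x0 1"])
          (use N first_walk[OF P] P_outside t0_12 in auto)
    next
      fix P' assume P': "P' \<in> walk_tuples (N - 1) (\<lambda>i. x (Suc i)) (\<lambda>i. t (Suc i)) (\<lambda>i. x0 (Suc i)) (\<lambda>i. t0 (Suc i))"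
      then show "?drop (?add P') = P'"
        unfolding walk_tuples_def by (auto simp: fun_eq_iff)
      have first_ok: "lattice_walk (x0 1) (t0 1) (x 1) (t 1) [x0 1]"
        unfolding t1 lattice_walk_same_time using True by simp
      have later_ok: "lattice_walk (x0 i) (t0 i) (x i) (t i) (P' (i - 1))" if "i \<in> {2..N}" for i
      proof -
        have "i - 1 \<in> {1..N - 1}" using that by auto
        then have "lattice_walk (x0 (Suc (i - 1))) (t0 (Suc (i - 1))) (x (Suc (i - 1))) (t (Suc (i - 1)))
            (P' (i - 1))"
          using P' unfolding walk_tuples_def by blast
        moreover have "Suc (i - 1) = i" using that by auto
        ultimately show ?thesis by simp
      qed
      have outside: "P' (i - 1) = []" if "i \<notin> {1..N}" "i \<noteq> 0" for i
      proof -
        have "i - 1 \<notin> {1..N - 1}" using that by auto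
        then show ?thesis using P' unfolding walk_tuples_def by blast
      qed
      have "lattice_walk (x0 i) (t0 i) (x i) (t i) (?add P' i)" if "i \<in> {1..N}" for i
        using first_ok later_ok[of i] that by (cases "i = 1") auto
      moreover have "?add P' i = []" if "i \<notin> {1..N}" for i
        using outside[of i] that N by auto
      ultimately show "?add P' \<in> walk_tuples N x t x0 t0"
        unfolding walk_tuples_def by blast
    qed
    then show ?thesis
      using True unfolding walk_green_def by simp
  qed
qed

section \<open>The determinant side\<close>

definition F_det :: "real \<Rightarrow> real \<Rightarrow> nat \<Rightarrow> (nat \<Rightarrow> int) \<Rightarrow> (nat \<Rightarrow> int) \<Rightarrow> (nat \<Rightarrow> int)
    \<Rightarrow> (nat \<Rightarrow> int) \<Rightarrow> real" where
  "F_det p q N x t x0 t0 =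
     det (mat N N (\<lambda>(i, j). F_real p q (int j - int i) (x (i+1) - x0 (j+1)) (t (i+1) - t0 (j+1))))"

text \<open>Column \<open>k\<close> is linear in its entries, which satisfy the time recursion of \<open>F\<close>.  In the
  blocked case the identity \<open>F_n(y, s) = F_(n+1)(y, s) - F_(n+1)(y + 1, s)\<close> turns column \<open>k\<close> of
  the jump determinant into column \<open>k\<close> of the waiting one plus column \<open>k - 1\<close>, so both
  determinants coincide and their combination collapses to the waiting one.\<close>

lemma F_det_first_step:
  fixes x0 :: "nat \<Rightarrow> int"
  assumes pq: "p + q = 1" and k: "k \<in> {1..N}" and tk: "\<forall>i\<in>{1..N}. t0 k < t i"
    and left: "1 < k \<Longrightarrow> x0 (k - 1) = x0 k + 1 \<Longrightarrow> t0 (k - 1) = t0 k + 1"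
  defines "blocked \<equiv> 1 < k \<and> x0 (k - 1) = x0 k + 1"
  shows "F_det p q N x t x0 t0 =
    (if blocked then 0 else p) * F_det p q N x t (x0(k := x0 k + 1)) (t0(k := t0 k + 1)) +
    (if blocked then 1 else q) * F_det p q N x t x0 (t0(k := t0 k + 1))"
proof -
  define c where "c = k - 1"
  have c: "c < N" "Suc c = k" using k unfolding c_def by auto
  define t0' where "t0' = t0(k := t0 k + 1)"
  define A where "A i j = F_real p q (int j - int i) (x (i+1) - x0 (j+1)) (t (i+1) - t0 (j+1))" for i j
  define B where "B i j = F_real p q (int j - int i) (x (i+1) - (x0(k := x0 k + 1)) (j+1)) (t (i+1) - t0' (j+1))"
    for i j
  define C where "C i j = F_real p q (int j - int i) (x (i+1) - x0 (j+1)) (t (i+1) - t0' (j+1))" for i j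
  have col_c: "A i c = p * B i c + q * C i c" if "i < N" for i
  proof -
    have "A i c = F_real p q (int c - int i) (x (i+1) - x0 k) (t (i+1) - t0 k)"
      using c by (simp add: A_def)
    also have "\<dots> = p * F_real p q (int c - int i) (x (i+1) - x0 k - 1) (t (i+1) - t0 k - 1) +
        q * F_real p q (int c - int i) (x (i+1) - x0 k) (t (i+1) - t0 k - 1)"
      by (rule F_real_time_step) (use tk[rule_format, of "i + 1"] that in auto)
    also have "\<dots> = p * B i c + q * C i c"
      using c by (simp add: B_def C_def t0'_def algebra_simps)
    finally show ?thesis .
  qed
  have other_cols: "A i j = B i j" "A i j = C i j" if "j \<noteq> c" for i j
    using that c by (auto simp: A_def B_def C_def t0'_def)
  have linear: "F_det p q N x t x0 t0 =
      p * F_det p q N x t (x0(k := x0 k + 1)) t0' + q * F_det p q N x t x0 t0'"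
    unfolding F_det_def A_def[symmetric] B_def[symmetric] C_def[symmetric]
    by (rule det_linear_col[OF c(1)]) (use col_c other_cols in auto)
  have "F_det p q N x t (x0(k := x0 k + 1)) t0' = F_det p q N x t x0 t0'" if blocked
  proof -
    have k1: "1 < k" and x0_left: "x0 (k - 1) = x0 k + 1" using that unfolding blocked_def by auto
    have t0_left: "t0 (k - 1) = t0 k + 1" using left[OF k1 x0_left] .
    have "B i c = C i (c - 1) + C i c" if "i < N" for i
    proof -
      have idx: "int (c - 1) = int c - 1" "c - 1 + 1 = k - 1" and "k - 1 \<noteq> k" using c k1 by auto
      have "C i (c - 1) = F_real p q (int c - 1 - int i) (x (i+1) - x0 (k - 1)) (t (i+1) - t0' (k - 1))"
        by (simp only: C_def idx)
      also have "\<dots> = F_real p q (int c - int i - 1) (x (i+1) - x0 k - 1) (t (i+1) - t0 k - 1)"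
        using x0_left t0_left \<open>k - 1 \<noteq> k\<close> by (simp add: t0'_def algebra_simps)
      finally have "C i (c - 1) = F_real p q (int c - int i - 1) (x (i+1) - x0 k - 1) (t (i+1) - t0 k - 1)" .
      moreover have "B i c = F_real p q (int c - int i) (x (i+1) - x0 k - 1) (t (i+1) - t0 k - 1)"
        "C i c = F_real p q (int c - int i) (x (i+1) - x0 k - 1 + 1) (t (i+1) - t0 k - 1)"
        using c by (simp_all add: B_def C_def t0'_def algebra_simps)
      ultimately show ?thesis
        using F_real_pascal[of p q "int c - int i - 1" "x (i+1) - x0 k - 1"] by simp
    qed
    moreover have "B i j = C i j" if "j \<noteq> c" for i j
      using other_cols[OF that] by simp
    ultimately show ?thesis
      unfolding F_det_def B_def[symmetric] C_def[symmetric]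
      by (intro det_add_col_to_col[of c N "c - 1"]) (use c k1 in auto)
  qed
  then show ?thesis
    using linear pq unfolding t0'_def by (auto simp flip: distrib_right)
qed

lemma F_det_0: "F_det p q 0 x t x0 t0 = 1"
  by (simp add: F_det_def)

lemma chain_le:
  fixes f :: "nat \<Rightarrow> int"
  assumes step: "\<forall>i\<in>{1..<N}. f i + d \<le> f (i + 1)" and "1 \<le> i" "i \<le> j" "j \<le> N"
  shows "f i + d * int (j - i) \<le> f j"
  using assms(3,4)
proof (induction j)
  case (Suc j)
  show ?case
  proof (cases "i = Suc j")
    case False
    then have "i \<le> j" "j \<in> {1..<N}" using Suc.prems \<open>1 \<le> i\<close> by auto
    then show ?thesis
      using Suc.IH step by (force simp: of_nat_diff algebra_simps)
  qed simp
qed simp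

lemma F_det_drop_first:
  assumes N: "1 \<le> N" and t1: "t0 1 = t 1" and later: "\<forall>j\<in>{2..N}. t 1 \<le> t0 j"
    and x_dec: "\<forall>i\<in>{1..<N}. x (i+1) < x i" and x0_dec: "\<forall>i\<in>{1..<N}. x0 (i+1) < x0 i"
  shows "F_det p q N x t x0 t0 = (if x 1 = x0 1 then
    F_det p q (N - 1) (\<lambda>i. x (Suc i)) (\<lambda>i. t (Suc i)) (\<lambda>i. x0 (Suc i)) (\<lambda>i. t0 (Suc i)) else 0)"
proof -
  define A where "A i j = F_real p q (int j - int i) (x (i+1) - x0 (j+1)) (t (i+1) - t0 (j+1))" for i j
  have x_far: "x (i + 1) + int i \<le> x 1" and x0_far: "x0 (i + 1) + int i \<le> x0 1" if "i < N" for i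
  proof -
    have "\<forall>i\<in>{1..<N}. - x i + 1 \<le> - x (i + 1)" "\<forall>i\<in>{1..<N}. - x0 i + 1 \<le> - x0 (i + 1)"
      using x_dec x0_dec by auto
    then show "x (i + 1) + int i \<le> x 1" "x0 (i + 1) + int i \<le> x0 1"
      using chain_le[of N "\<lambda>i. - x i" 1 1 "i + 1"] chain_le[of N "\<lambda>i. - x0 i" 1 1 "i + 1"] that
      by auto
  qed
  have first_row: "A 0 j = 0" if "0 < j" "j < N" "x0 1 \<le> x 1" for j
  proof -
    have "x 1 - x0 (j+1) > 0" "t 1 - t0 (j+1) \<le> 0" using x0_far[of j] later that by auto
    then show ?thesis
      unfolding A_def by (cases "t 1 - t0 (j+1) < 0") (auto simp: F_real_negative_time F_real_time_0_pos)
  qed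
  have "F_det p q N x t x0 t0 = det (mat N N (\<lambda>(i, j). A i j))"
    unfolding F_det_def A_def ..
  also have "\<dots> = (if x 1 = x0 1 then
      F_det p q (N - 1) (\<lambda>i. x (Suc i)) (\<lambda>i. t (Suc i)) (\<lambda>i. x0 (Suc i)) (\<lambda>i. t0 (Suc i)) else 0)"
  proof (cases "x 1" "x0 1" rule: linorder_cases)
    case less
    have "A i 0 = 0" if "i < N" for i
      using x_far[OF that] less t1 F_real_vanish[of "- int i"]
      by (cases "i = 0") (auto simp: A_def F_real_time_0_index_0)
    then show ?thesis
      using less N by (simp add: det_zero_col[of 0])
  next
    case equal
    then show ?thesis
      using N first_row t1
      by (simp add: det_first_row_unit A_def F_det_def F_real_time_0_index_0)
  next
    case greater
    have "A 0 j = 0" if "j < N" for j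
      using first_row[OF _ that] greater t1 by (cases "j = 0") (auto simp: A_def F_real_time_0_pos)
    then show ?thesis
      using greater N by (simp add: det_zero_row[of 0])
  qed
  finally show ?thesis .
qed

section \<open>Both sides agree\<close>

text \<open>Advancing the earliest starting point by one time unit may make the starting times decrease
  by one from left to right, so the induction runs over this relaxed admissibility.\<close>

definition relaxed_admissible :: "nat \<Rightarrow> (nat \<Rightarrow> int) \<Rightarrow> (nat \<Rightarrow> int) \<Rightarrow> (nat \<Rightarrow> int)
    \<Rightarrow> (nat \<Rightarrow> int) \<Rightarrow> bool" where
  "relaxed_admissible N x t x0 t0 \<longleftrightarrow> admissible N x t \<and>
     (\<forall>i\<in>{1..<N}. x0 (i+1) < x0 i \<and> t0 i \<le> t0 (i+1) + 1) \<and> (\<forall>i\<in>{1..N}. t0 i \<le> t i)"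

lemma earliest_start:
  assumes adm: "relaxed_admissible N x t x0 t0" and j: "j \<in> {1..N}" "t0 j < t 1"
  obtains k where "k \<in> {1..N}" "\<forall>i\<in>{1..N}. t0 k < t i"
    "k < N \<Longrightarrow> t0 k \<le> t0 (k + 1)" "1 < k \<Longrightarrow> t0 (k - 1) = t0 k + 1"
proof -
  define M where "M = Min (t0 ` {1..N})"
  have M_le: "M \<le> t0 i" if "i \<in> {1..N}" for i unfolding M_def using that by simp
  have "M \<in> t0 ` {1..N}" unfolding M_def using j by (intro Min_in) auto
  then have ex: "\<exists>i. i \<in> {1..N} \<and> t0 i = M" by auto
  define k where "k = (LEAST i. i \<in> {1..N} \<and> t0 i = M)"
  have k: "k \<in> {1..N}" "t0 k = M"
    using LeastI_ex[OF ex] unfolding k_def by auto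
  have first: "t0 i \<noteq> M" if "i \<in> {1..N}" "i < k" for i
    using not_less_Least[of i "\<lambda>i. i \<in> {1..N} \<and> t0 i = M"] that unfolding k_def by auto
  have "t 1 \<le> t i" if "i \<in> {1..N}" for i
    using chain_le[of N t 0 1 i] adm that unfolding relaxed_admissible_def admissible_def by auto
  then have "\<forall>i\<in>{1..N}. t0 k < t i"
    using M_le[OF j(1)] j(2) k(2) by force
  moreover have "t0 k \<le> t0 (k + 1)" if "k < N"
    using M_le[of "k + 1"] k that by auto
  moreover have "t0 (k - 1) = t0 k + 1" if "1 < k"
  proof -
    have "k - 1 \<in> {1..<N}" "k - 1 + 1 = k" using k that by auto
    then have "t0 (k - 1) \<le> t0 k + 1" using adm unfolding relaxed_admissible_def by metis
    moreover have "M < t0 (k - 1)"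
      using first[of "k - 1"] M_le[of "k - 1"] k that by fastforce
    ultimately show ?thesis using k(2) by simp
  qed
  ultimately show ?thesis using that k(1) by blast
qed

lemma relaxed_admissible_advance:
  assumes adm: "relaxed_admissible N x t x0 t0" and k: "k \<in> {1..N}" and tk: "t0 k < t k"
    and right: "k < N \<Longrightarrow> t0 k \<le> t0 (k + 1)"
    and d: "d \<in> {0, 1}" and unblocked: "d = 1 \<Longrightarrow> \<not> (1 < k \<and> x0 (k - 1) = x0 k + 1)"
  shows "relaxed_admissible N x t (x0(k := x0 k + d)) (t0(k := t0 k + 1))"
proof -
  have "x0 k + d < x0 (k - 1)" if "1 < k"
  proof -
    have "k - 1 \<in> {1..<N}" "k - 1 + 1 = k" using k that by auto
    then have "x0 k < x0 (k - 1)" using adm unfolding relaxed_admissible_def by metis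
    then show ?thesis using d unblocked that by auto
  qed
  then show ?thesis
    using adm k tk right d unfolding relaxed_admissible_def
    by (auto simp: le_diff_eq dest: bspec[of _ _ k])
qed

lemma relaxed_admissible_drop_first:
  "relaxed_admissible N x t x0 t0 \<Longrightarrow>
    relaxed_admissible (N - 1) (\<lambda>i. x (Suc i)) (\<lambda>i. t (Suc i)) (\<lambda>i. x0 (Suc i)) (\<lambda>i. t0 (Suc i))"
  unfolding relaxed_admissible_def admissible_def by auto

lemma walk_green_eq_F_det:
  assumes pq: "p + q = 1"
  shows "relaxed_admissible N x t x0 t0 \<Longrightarrow> walk_green p q N x t x0 t0 = F_det p q N x t x0 t0"
proof (induction "N + (\<Sum>i\<in>{1..N}. nat (t i - t0 i))" arbitrary: N x t x0 t0 rule: less_induct)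
  case less
  have adm: "relaxed_admissible N x t x0 t0" by fact
  consider "N = 0" | "1 \<le> N" "\<exists>j\<in>{1..N}. t0 j < t 1" | "1 \<le> N" "\<forall>j\<in>{1..N}. t 1 \<le> t0 j"
    by force
  then show ?case
  proof cases
    case 1
    then show ?thesis by (simp add: walk_green_0 F_det_0)
  next
    case 2
    then obtain k where k: "k \<in> {1..N}" and tk: "\<forall>i\<in>{1..N}. t0 k < t i"
      and right: "k < N \<Longrightarrow> t0 k \<le> t0 (k + 1)" and left: "1 < k \<Longrightarrow> t0 (k - 1) = t0 k + 1"
      using earliest_start[OF adm] by blast
    define blocked where "blocked \<longleftrightarrow> 1 < k \<and> x0 (k - 1) = x0 k + 1"
    let ?t0' = "t0(k := t0 k + 1)"
    have smaller: "N + (\<Sum>i\<in>{1..N}. nat (t i - ?t0' i)) < N + (\<Sum>i\<in>{1..N}. nat (t i - t0 i))"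
      using k tk by (intro add_strict_left_mono sum_strict_mono_ex1) auto
    have wait: "walk_green p q N x t x0 ?t0' = F_det p q N x t x0 ?t0'"
      by (rule less.hyps[OF smaller])
        (use relaxed_admissible_advance[OF adm k _ right, of 0] k tk in \<open>simp add: fun_upd_def\<close>)
    have jump: "walk_green p q N x t (x0(k := x0 k + 1)) ?t0' = F_det p q N x t (x0(k := x0 k + 1)) ?t0'"
      if "\<not> blocked"
      by (rule less.hyps[OF smaller])
        (use relaxed_admissible_advance[OF adm k _ right, of 1] k tk that
          in \<open>simp add: blocked_def fun_upd_def\<close>)
    show ?thesis
      using walk_green_first_step[OF k _ right left] F_det_first_step[OF pq k tk left] k tk wait jump
      by (cases blocked) (auto simp: blocked_def)
  next
    case 3
    then have t1: "t0 1 = t 1" "\<forall>j\<in>{2..N}. t 1 \<le> t0 j"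
      using adm unfolding relaxed_admissible_def by (auto dest!: bspec[of _ _ 1])
    have "(\<Sum>i\<in>{1..N - 1}. nat (t (Suc i) - t0 (Suc i))) = (\<Sum>i\<in>{Suc 1..Suc (N - 1)}. nat (t i - t0 i))"
      by (rule sum.shift_bounds_cl_Suc_ivl[symmetric])
    also have "\<dots> \<le> (\<Sum>i\<in>{1..N}. nat (t i - t0 i))"
      by (rule sum_mono2) auto
    finally have "N - 1 + (\<Sum>i\<in>{1..N - 1}. nat (t (Suc i) - t0 (Suc i))) <
        N + (\<Sum>i\<in>{1..N}. nat (t i - t0 i))"
      using 3 by linarith
    from less.hyps[OF this relaxed_admissible_drop_first[OF adm]] show ?thesis
      using walk_green_drop_first[of N t0 t] F_det_drop_first[of N t0 t] t1 3 adm
      unfolding relaxed_admissible_def admissible_def by simp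
  qed
qed

theorem proposition2:
  fixes N :: nat and p q :: real and x t x0 t0 :: "nat \<Rightarrow> int"
  assumes "N \<ge> 1" and "0 < p" and "p < 1" and "q = 1 - p"
    and "admissible N x0 t0" and "admissible N x t"
    and "\<forall>i\<in>{1..N}. t i > t0 i"
  shows "complex_of_real (green p q N x t x0 t0) =
    det (mat N N (\<lambda>(i, j). F_fun p q (int j - int i) (x (i+1) - x0 (j+1)) (t (i+1) - t0 (j+1))))"
proof -
  have "relaxed_admissible N x t x0 t0"
    using assms(5-7) unfolding relaxed_admissible_def admissible_def by (auto simp: less_imp_le)
  then have "green p q N x t x0 t0 = F_det p q N x t x0 t0"
    using walk_green_eq_F_det[of p q] green_eq_walk_green assms(4,7) by simp
  moreover have "mat N N (\<lambda>(i, j). F_fun p q (int j - int i) (x (i+1) - x0 (j+1)) (t (i+1) - t0 (j+1))) =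
      map_mat complex_of_real
        (mat N N (\<lambda>(i, j). F_real p q (int j - int i) (x (i+1) - x0 (j+1)) (t (i+1) - t0 (j+1))))"
    by (rule eq_matI) (auto simp: F_fun_eq_F_real)
  ultimately show ?thesis
    by (simp add: F_det_def of_real_hom.hom_det)
qed

end
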